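(* Let $p$ be an odd prime, let $G$ be a proper subgroup of the multiplicative group $\mathbb{F}_p^*=\mathbb{F}_p\setminus\{0\}$, and let $\lambda\in G$. Then there do not exist sets $A,B\subseteq \mathbb{F}_p^*$ with $|A|\ge 2$ and $|B|\ge 2$ such that \[ AB=(G-\lambda)\setminus\{0\}. \]
   Context: $\mathbb{F}_p$ denotes the field with $p$ elements. For $A,B\subseteq\mathbb{F}_p$, the product set is $AB=\{ab: a\in A,\ b\in B\}$, and $G-\lambda=\{g-\lambda: g\in G\}$. *)

theory Defs
  imports "Berlekamp_Zassenhaus.Finite_Field"
begin

definition prodset :: "'a::times set \<Rightarrow> 'a set \<Rightarrow> 'a set" where
  "prodset A B = {a * b | a b. a \<in> A \<and> b \<in> B}"

definition mult_subgroup :: "'a::field set \<Rightarrow> bool" where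
  "mult_subgroup G \<longleftrightarrow> G \<subseteq> UNIV - {0} \<and> 1 \<in> G \<and>
     (\<forall>x\<in>G. \<forall>y\<in>G. x * y \<in> G) \<and> (\<forall>x\<in>G. inverse x \<in> G)"

end

theory Submission
  imports Defs
begin

(* Dividing A by lam reduces the equation to A B = S, where S = {g - 1 | g in G, g ~= 1}; with
   d = |G| this gives (x y + 1)^d = 1 for all x in A, y in B.
   Stepanov's method: let m = |B| and let l_y be the Lagrange weights of evaluation at 0 on B.
   The polynomial F(t) = Sum_y l_y (1 + y t)^(d+m-1) - 1 has degree at most d + m - 1, a nonzero
   coefficient at t^m (because 2d is below the characteristic), and vanishes to order m at 0 and at
   every x in A.  Hence (|A| + 1) m <= d + m - 1, i.e. |A| |B| <= d - 1 = |S|, so every element of S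
   is a product in exactly one way and F = k t^m Prod_x (t - x)^m.  Comparing the coefficients of
   t^m and t^(m+1) yields (d - 1) Sum B = - m (m + 1) Sum 1/A, and symmetrically with A and B
   exchanged.  Together with Sum A Sum B = Sum S = -d and Sum 1/A Sum 1/B = Sum 1/S = -(d - 1)/2
   this forces 2d = (|A| + 1)(|B| + 1) = d + |A| + |B|, whereas |A| + |B| <= |A| |B| = d - 1. *)

section \<open>Products of linear factors and Lagrange interpolation at 0\<close>

lemma degree_prod_linear: "degree (\<Prod>b\<in>B. [:- b, 1::'a::idom:]) = card B"
  by (cases "finite B") (simp_all add: degree_prod_eq_sum_degree)

lemma coeff_mult_1:
  "coeff (p * q) 1 = coeff p 0 * coeff q 1 + coeff p 1 * coeff (q::'a::comm_semiring_1 poly) 0"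
  by (simp add: coeff_mult atMost_Suc add.commute)

lemma coeff_1_power:
  "coeff (p ^ Suc m) 1 = of_nat (Suc m) * coeff p 0 ^ m * coeff (p::'a::comm_semiring_1 poly) 1"
proof (induction m)
  case (Suc m)
  have "coeff (p ^ Suc (Suc m)) 1 = coeff p 0 * coeff (p ^ Suc m) 1 + coeff p 1 * coeff (p ^ Suc m) 0"
    by (simp only: power_Suc[of p "Suc m"] coeff_mult_1)
  then show ?case unfolding Suc coeff_0_power by (simp add: algebra_simps)
qed simp

lemma coeff_prod_linear_card: "coeff (\<Prod>b\<in>B. [:- b, 1::'a::idom:]) (card B) = 1"
  using lead_coeff_prod[of "\<lambda>b. [:- b, 1::'a:]" B] by (simp add: degree_prod_linear)

lemma coeff_prod_linear_pred_card:
  assumes "finite B" "B \<noteq> {}"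
  shows "coeff (\<Prod>b\<in>B. [:- b, 1::'a::idom:]) (card B - 1) = - (\<Sum>b\<in>B. b)"
  using assms
proof (induction B rule: finite_ne_induct)
  case (insert x F)
  obtain k where k: "card F = Suc k" using insert by (cases "card F") auto
  have "(\<Prod>b\<in>insert x F. [:- b, 1::'a:]) =
      smult (- x) (\<Prod>b\<in>F. [:- b, 1:]) + pCons 0 (\<Prod>b\<in>F. [:- b, 1:])"
    using insert by (simp add: mult_pCons_left)
  then show ?case
    using insert k coeff_prod_linear_card[of F] by (simp add: coeff_pCons)
qed simp

lemma coeff_1_prod_linear:
  assumes "finite X" "0 \<notin> X"
  shows "coeff (\<Prod>x\<in>X. [:- x, 1::'a::field:]) 1 =
    - coeff (\<Prod>x\<in>X. [:- x, 1:]) 0 * (\<Sum>x\<in>X. inverse x)"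
  using assms
proof (induction X rule: finite_induct)
  case (insert x F)
  then show ?case by (simp add: coeff_mult_1 field_simps)
qed simp

lemma coeff_1_power_prod_linear:
  assumes "finite X" and "0 \<notin> X"
  shows "coeff ((\<Prod>x\<in>X. [:- x, 1::'a::field:]) ^ m) 1 =
    - of_nat m * (\<Sum>x\<in>X. inverse x) * coeff ((\<Prod>x\<in>X. [:- x, 1:]) ^ m) 0"
proof (cases m)
  case (Suc k)
  then show ?thesis
    using coeff_1_prod_linear[OF assms]
    by (simp only: coeff_1_power coeff_0_power) (simp add: algebra_simps)
qed simp

lemma degree_diff_less:
  assumes "0 < n" and "\<And>k. n \<le> k \<Longrightarrow> coeff p k = coeff q k"
  shows "degree (p - q) < n"
  using assms by (intro degree_lessI) auto

definition lagrange_basis_at_0 :: "'a::field set \<Rightarrow> 'a \<Rightarrow> 'a" where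
  "lagrange_basis_at_0 Y y = (\<Prod>y'\<in>Y - {y}. - y' / (y - y'))"

lemma lagrange_interpolation_at_0:
  fixes L :: "'a::field poly"
  assumes fin: "finite Y" and deg: "degree L < card Y"
  shows "(\<Sum>y\<in>Y. lagrange_basis_at_0 Y y * poly L y) = poly L 0"
proof -
  define basis where
    "basis y = smult (\<Prod>y'\<in>Y - {y}. inverse (y - y')) (\<Prod>y'\<in>Y - {y}. [:- y', 1:])" for y
  define I where "I = (\<Sum>y\<in>Y. smult (poly L y) (basis y))"
  have poly_basis: "poly (basis y) x = (\<Prod>y'\<in>Y - {y}. (x - y') / (y - y'))" for y x
    by (simp add: basis_def poly_prod divide_inverse prod.distrib mult.commute)
  have basis_delta: "poly (basis y) z = (if y = z then 1 else 0)" if "y \<in> Y" "z \<in> Y" for y z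
    using fin that by (auto simp: poly_basis intro: prod.neutral prod_zero)
  have "degree (basis y) \<le> card Y - 1" if "y \<in> Y" for y
    using fin that by (simp add: basis_def degree_prod_linear)
  then have "degree I \<le> card Y - 1"
    unfolding I_def by (intro degree_sum_le[OF fin] order.trans[OF degree_smult_le]) auto
  moreover have "poly I z = poly L z" if "z \<in> Y" for z
  proof -
    have "poly I z = (\<Sum>y\<in>Y. if y = z then poly L y else 0)"
      unfolding I_def poly_sum using basis_delta that by (intro sum.cong) auto
    also have "\<dots> = poly L z" using fin that by (simp add: sum.delta)
    finally show ?thesis .
  qed
  ultimately have "L = I"
    using deg by (intro poly_eqI_degree[of Y]) auto
  then have "poly L 0 = poly I 0" by (rule arg_cong)
  also have "\<dots> = (\<Sum>y\<in>Y. lagrange_basis_at_0 Y y * poly L y)"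
    by (simp add: I_def poly_sum poly_basis lagrange_basis_at_0_def mult.commute)
  finally show ?thesis ..
qed

lemma lagrange_sum_low_power:
  fixes Y :: "'a::field set"
  assumes "finite Y" and "k < card Y"
  shows "(\<Sum>y\<in>Y. lagrange_basis_at_0 Y y * (y ^ k * (a * y + 1) ^ (card Y - 1 - k))) =
    (if k = 0 then 1 else 0)"
proof -
  define L where "L = monom (1::'a) k * [:1, a:] ^ (card Y - 1 - k)"
  have "degree L \<le> k + (card Y - 1 - k)"
    unfolding L_def
    by (rule order.trans[OF degree_mult_le], rule add_mono, simp add: degree_monom_le,
        rule order.trans[OF degree_power_le], simp)
  then have "degree L < card Y" using assms(2) by linarith
  then have "(\<Sum>y\<in>Y. lagrange_basis_at_0 Y y * poly L y) = poly L 0"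
    by (rule lagrange_interpolation_at_0[OF assms(1)])
  moreover have "poly L y = y ^ k * (a * y + 1) ^ (card Y - 1 - k)" for y
    by (simp add: L_def poly_monom algebra_simps)
  ultimately show ?thesis by simp
qed

lemma lagrange_sum_power_card:
  fixes Y :: "'a::field set"
  assumes fin: "finite Y" and ne: "Y \<noteq> {}"
  shows "(\<Sum>y\<in>Y. lagrange_basis_at_0 Y y * y ^ card Y) = - (\<Prod>y\<in>Y. - y)"
proof -
  let ?w = "\<Prod>y\<in>Y. [:- y, 1::'a:]"
  have "0 < card Y" using fin ne by (simp add: card_gt_0_iff)
  have "degree (monom 1 (card Y) - ?w) < card Y"
  proof (rule degree_diff_less)
    show "0 < card Y" by fact
    fix k assume "card Y \<le> k"
    then show "coeff (monom 1 (card Y)) k = coeff ?w k"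
      using coeff_prod_linear_card[of Y] coeff_eq_0[of ?w k]
      by (cases "k = card Y") (auto simp: degree_prod_linear coeff_monom)
  qed
  from lagrange_interpolation_at_0[OF fin this]
  have "(\<Sum>y\<in>Y. lagrange_basis_at_0 Y y * poly (monom 1 (card Y) - ?w) y) = - (\<Prod>y\<in>Y. - y)"
    using \<open>0 < card Y\<close> by (simp add: poly_monom poly_prod)
  moreover have "poly (monom 1 (card Y) - ?w) y = y ^ card Y" if "y \<in> Y" for y
    using fin that by (simp add: poly_monom poly_prod prod_zero_iff)
  ultimately show ?thesis by simp
qed

lemma lagrange_sum_power_Suc_card:
  fixes Y :: "'a::field set"
  assumes fin: "finite Y" and ne: "Y \<noteq> {}"
  shows "(\<Sum>y\<in>Y. lagrange_basis_at_0 Y y * y ^ Suc (card Y)) =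
    (\<Sum>y\<in>Y. y) * (\<Sum>y\<in>Y. lagrange_basis_at_0 Y y * y ^ card Y)"
proof -
  let ?w = "\<Prod>y\<in>Y. [:- y, 1::'a:]" and ?e = "\<Sum>y\<in>Y. y" and ?m = "card Y"
  obtain j where j: "?m = Suc j" using fin ne by (cases ?m) auto
  have coeff_shift:
    "coeff ([:?e, 1:] * ?w) k = ?e * coeff ?w k + (case k of 0 \<Rightarrow> 0 | Suc i \<Rightarrow> coeff ?w i)" for k
    by (simp add: coeff_pCons split: nat.split)
  have "degree (monom 1 (Suc ?m) - [:?e, 1:] * ?w) < ?m"
  proof (rule degree_diff_less)
    show "0 < ?m" using j by simp
    fix k assume "?m \<le> k"
    then consider "k = ?m" | "k = Suc ?m" | "Suc ?m < k"
      by linarith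
    then show "coeff (monom 1 (Suc ?m)) k = coeff ([:?e, 1:] * ?w) k"
    proof cases
      case 1
      then show ?thesis
        using coeff_prod_linear_card[of Y] coeff_prod_linear_pred_card[OF fin ne] j
        by (simp add: coeff_shift coeff_monom)
    qed (auto simp: coeff_shift coeff_monom coeff_prod_linear_card coeff_eq_0 degree_prod_linear)
  qed
  from lagrange_interpolation_at_0[OF fin this]
  have "(\<Sum>y\<in>Y. lagrange_basis_at_0 Y y * poly (monom 1 (Suc ?m) - [:?e, 1:] * ?w) y) =
      ?e * - (\<Prod>y\<in>Y. - y)"
    by (simp add: poly_monom poly_prod)
  moreover have "poly (monom 1 (Suc ?m) - [:?e, 1:] * ?w) y = y ^ Suc ?m" if "y \<in> Y" for y
  proof -
    have "(\<Prod>b\<in>Y. y - b) = 0" using fin that by (intro prod_zero) auto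
    then show ?thesis by (simp add: poly_monom poly_prod)
  qed
  ultimately show ?thesis
    using lagrange_sum_power_card[OF fin ne] by simp
qed

section \<open>Natural numbers below the characteristic\<close>

lemma of_nat_neq_0_below_CHAR:
  assumes "0 < n" and "CHAR('a) = 0 \<or> n < CHAR('a)"
  shows "of_nat n \<noteq> (0::'a::semiring_1)"
  using assms by (auto simp: of_nat_eq_0_iff_char_dvd dest: dvd_imp_le)

lemma of_nat_inj_below_CHAR:
  assumes "CHAR('a) = 0 \<or> max x y < CHAR('a)" and "of_nat x = (of_nat y :: 'a::semiring_1_cancel)"
  shows "x = y"
  using assms by (auto simp: of_nat_eq_iff_cong_CHAR intro: cong_less_modulus_unique_nat)

lemma of_nat_binomial_neq_0_below_CHAR:
  assumes "CHAR('a) = 0 \<or> n < CHAR('a)" and "k \<le> n"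
  shows "of_nat (n choose k) \<noteq> (0::'a::idom)"
proof
  assume binomial_0: "of_nat (n choose k) = (0::'a)"
  have "(of_nat (fact n) :: 'a) = (\<Prod>i\<in>{1..n}. of_nat i)"
    by (simp add: fact_prod[where 'a=nat] of_nat_prod)
  also have "\<dots> \<noteq> 0"
    using assms(1) of_nat_neq_0_below_CHAR[of _, where 'a='a] by (fastforce simp: prod_zero_iff)
  finally have "(of_nat (fact n) :: 'a) \<noteq> 0" .
  moreover have "(of_nat (fact n) :: 'a) = of_nat (fact k * fact (n - k)) * of_nat (n choose k)"
    by (metis binomial_fact_lemma[OF assms(2)] of_nat_mult)
  ultimately show False using binomial_0 by simp
qed

section \<open>Stepanov's auxiliary polynomial\<close>

lemma power_linear_Taylor:
  fixes a y :: "'a::field"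
  shows "[:1, y:] ^ D =
    (\<Sum>k\<le>D. smult (of_nat (D choose k) * y ^ k * (a * y + 1) ^ (D - k)) ([:- a, 1:] ^ k))"
proof -
  have "[:1, y:] = smult y [:- a, 1:] + [:a * y + 1:]" by simp
  then have "[:1, y:] ^ D =
      (\<Sum>k\<le>D. of_nat (D choose k) * smult y [:- a, 1:] ^ k * [:a * y + 1:] ^ (D - k))"
    by (simp only: binomial_ring)
  also have "\<dots> = (\<Sum>k\<le>D. smult (of_nat (D choose k) * y ^ k * (a * y + 1) ^ (D - k)) ([:- a, 1:] ^ k))"
    unfolding smult_power poly_const_pow of_nat_poly by (simp add: algebra_simps)
  finally show ?thesis .
qed

definition stepanov_poly :: "'a::field set \<Rightarrow> nat \<Rightarrow> 'a poly" where
  "stepanov_poly Y d = (\<Sum>y\<in>Y. smult (lagrange_basis_at_0 Y y) ([:1, y:] ^ (d + card Y - 1))) - 1"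

lemma stepanov_poly_Taylor:
  fixes Y :: "'a::field set" and d :: nat
  defines "D \<equiv> d + card Y - 1"
  shows "stepanov_poly Y d = (\<Sum>k\<le>D. smult (of_nat (D choose k) *
      (\<Sum>y\<in>Y. lagrange_basis_at_0 Y y * (y ^ k * (a * y + 1) ^ (D - k)))) ([:- a, 1:] ^ k)) - 1"
proof -
  have "(\<Sum>y\<in>Y. smult (lagrange_basis_at_0 Y y) ([:1, y:] ^ D)) =
      (\<Sum>y\<in>Y. \<Sum>k\<le>D. smult (lagrange_basis_at_0 Y y *
        (of_nat (D choose k) * y ^ k * (a * y + 1) ^ (D - k))) ([:- a, 1:] ^ k))"
    by (simp add: power_linear_Taylor[of y D a for y] smult_sum2)
  also have "\<dots> = (\<Sum>k\<le>D. smult (of_nat (D choose k) *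
      (\<Sum>y\<in>Y. lagrange_basis_at_0 Y y * (y ^ k * (a * y + 1) ^ (D - k)))) ([:- a, 1:] ^ k))"
    by (subst sum.swap) (simp add: smult_sum sum_distrib_left mult_ac)
  finally show ?thesis by (simp add: stepanov_poly_def D_def)
qed

lemma stepanov_poly_vanishing:
  fixes Y :: "'a::field set"
  assumes fin: "finite Y" and ne: "Y \<noteq> {}" and "1 \<le> d"
    and root: "\<And>y. y \<in> Y \<Longrightarrow> (a * y + 1) ^ d = 1"
  shows "[:- a, 1:] ^ card Y dvd stepanov_poly Y d"
proof -
  define D where "D = d + card Y - 1"
  define \<gamma> where "\<gamma> k = of_nat (D choose k) *
    (\<Sum>y\<in>Y. lagrange_basis_at_0 Y y * (y ^ k * (a * y + 1) ^ (D - k)))" for k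
  \<comment> \<open>Since (a y + 1)^d = 1 on Y, the low Taylor coefficients at a are Lagrange
    interpolations at 0.\<close>
  have low: "\<gamma> k = (if k = 0 then 1 else 0)" if "k < card Y" for k
  proof -
    have "(a * y + 1) ^ (D - k) = (a * y + 1) ^ (card Y - 1 - k)" if "y \<in> Y" for y
    proof -
      have "D - k = d + (card Y - 1 - k)" using \<open>k < card Y\<close> \<open>1 \<le> d\<close> by (simp add: D_def)
      then show ?thesis using root[OF that] by (simp add: power_add)
    qed
    then show ?thesis
      using lagrange_sum_low_power[OF fin that, of a] by (simp add: \<gamma>_def cong: sum.cong)
  qed
  have "stepanov_poly Y d = (\<Sum>k\<le>D. smult (\<gamma> k) ([:- a, 1:] ^ k)) - 1"
    unfolding \<gamma>_def D_def by (rule stepanov_poly_Taylor)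
  also have "{..D} = {..<card Y} \<union> {card Y..D}" using \<open>1 \<le> d\<close> by (auto simp: D_def)
  also have "(\<Sum>k\<in>{..<card Y} \<union> {card Y..D}. smult (\<gamma> k) ([:- a, 1:] ^ k)) =
      (\<Sum>k<card Y. smult (\<gamma> k) ([:- a, 1:] ^ k)) + (\<Sum>k\<in>{card Y..D}. smult (\<gamma> k) ([:- a, 1:] ^ k))"
    by (rule sum.union_disjoint) auto
  also have "(\<Sum>k<card Y. smult (\<gamma> k) ([:- a, 1:] ^ k)) = (\<Sum>k<card Y. if k = 0 then 1 else 0)"
    by (intro sum.cong) (simp_all add: low)
  also have "\<dots> = 1"
    using fin ne by (simp add: card_gt_0_iff)
  finally have "stepanov_poly Y d = (\<Sum>k\<in>{card Y..D}. smult (\<gamma> k) ([:- a, 1:] ^ k))"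
    by simp
  also have "[:- a, 1:] ^ card Y dvd \<dots>"
    by (intro dvd_sum dvd_smult) (simp add: le_imp_power_dvd)
  finally show ?thesis .
qed

lemma stepanov_poly_coeff:
  fixes Y :: "'a::field set"
  assumes "0 < k" and "k \<le> d + card Y - 1"
  shows "coeff (stepanov_poly Y d) k =
    of_nat ((d + card Y - 1) choose k) * (\<Sum>y\<in>Y. lagrange_basis_at_0 Y y * y ^ k)"
  using assms
  by (simp add: stepanov_poly_def coeff_sum coeff_linear_poly_power sum_distrib_right mult_ac)

lemma stepanov_poly_degree: "degree (stepanov_poly Y d) \<le> d + card Y - 1"
proof -
  have "degree (smult (lagrange_basis_at_0 Y y) ([:1, y:] ^ (d + card Y - 1))) \<le> d + card Y - 1"
    for y :: 'a
    by (rule order.trans[OF degree_smult_le], rule order.trans[OF degree_power_le]) simp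
  then show ?thesis
    unfolding stepanov_poly_def
    by (cases "finite Y") (auto intro!: degree_diff_le degree_sum_le)
qed

lemma coprime_linear_poly:
  fixes s t :: "'a::field_gcd"
  assumes "s \<noteq> t"
  shows "coprime [:- s, 1:] [:- t, 1:]"
proof (rule coprimeI)
  fix c assume "c dvd [:- s, 1:]" and "c dvd [:- t, 1:]"
  then have "c dvd [:- s, 1:] - [:- t, 1:]" by (rule dvd_diff)
  then have c_dvd: "c dvd [:t - s:]" by simp
  moreover have "[:t - s:] \<noteq> 0" using assms by simp
  ultimately have "c \<noteq> 0" and "degree c = 0"
    using dvd_imp_degree_le[OF c_dvd] by auto
  then show "is_unit c" by (simp add: is_unit_iff_degree)
qed

lemma prod_linear_power_dvd:
  fixes p :: "'a::field_gcd poly"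
  assumes "finite T" and "\<And>t. t \<in> T \<Longrightarrow> [:- t, 1:] ^ m dvd p"
  shows "(\<Prod>t\<in>T. [:- t, 1:] ^ m) dvd p"
  using assms
proof (induction T rule: finite_induct)
  case (insert x T)
  have "coprime ([:- x, 1:] ^ m) ([:- t, 1:] ^ m)" if "t \<in> T" for t
    using that insert.hyps(2) coprime_linear_poly[of x t] by (cases "x = t") auto
  then have "coprime ([:- x, 1:] ^ m) (\<Prod>t\<in>T. [:- t, 1:] ^ m)"
    by (rule prod_coprime_right)
  then show ?case using insert by (simp add: divides_mult)
qed simp

lemma stepanov_poly_coeff_card:
  fixes Y :: "'a::field set"
  assumes "finite Y" and "Y \<noteq> {}" and "1 \<le> d"
  shows "coeff (stepanov_poly Y d) (card Y) =
    - of_nat ((d + card Y - 1) choose card Y) * (\<Prod>y\<in>Y. - y)"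
  using assms stepanov_poly_coeff[of "card Y" d Y] lagrange_sum_power_card[OF assms(1,2)]
  by (simp add: card_gt_0_iff)

lemma stepanov_poly_coeff_card_neq_0:
  fixes Y :: "'a::field set"
  assumes "finite Y" and "Y \<noteq> {}" and "0 \<notin> Y" and "1 \<le> d"
    and "CHAR('a) = 0 \<or> d + card Y \<le> CHAR('a)"
  shows "coeff (stepanov_poly Y d) (card Y) \<noteq> 0"
proof -
  have "of_nat ((d + card Y - 1) choose card Y) \<noteq> (0::'a)"
    using assms(4,5) by (intro of_nat_binomial_neq_0_below_CHAR) auto
  moreover have "(\<Prod>y\<in>Y. - y) \<noteq> 0" using assms(1,3) by auto
  ultimately show ?thesis by (simp add: stepanov_poly_coeff_card[OF assms(1,2,4)])
qed

lemma stepanov_poly_coeff_Suc_card: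
  fixes Y :: "'a::field set"
  assumes "finite Y" and "Y \<noteq> {}" and "2 \<le> d"
  shows "of_nat (Suc (card Y)) * coeff (stepanov_poly Y d) (Suc (card Y)) =
    of_nat (d - 1) * (\<Sum>y\<in>Y. y) * coeff (stepanov_poly Y d) (card Y)"
proof -
  define m and D where "m = card Y" and "D = d + card Y - 1"
  have "m \<noteq> 0" using assms(1,2) by (simp add: m_def)
  have "Suc m * (D choose Suc m) = D * ((D - 1) choose m)" by (rule binomial_absorption)
  also have "\<dots> = (d - 1) * (D choose m)"
    using \<open>m \<noteq> 0\<close> binomial_absorb_comp[of D m] by (simp add: D_def m_def)
  finally have "of_nat (Suc m) * of_nat (D choose Suc m) = of_nat (d - 1) * (of_nat (D choose m) :: 'a)"
    by (metis of_nat_mult)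
  moreover have "coeff (stepanov_poly Y d) m = of_nat (D choose m) *
      (\<Sum>y\<in>Y. lagrange_basis_at_0 Y y * y ^ card Y)"
    using stepanov_poly_coeff[of m d Y] \<open>m \<noteq> 0\<close> assms(3) by (simp add: m_def D_def)
  moreover have "coeff (stepanov_poly Y d) (Suc m) = of_nat (D choose Suc m) * (\<Sum>y\<in>Y. y) *
      (\<Sum>y\<in>Y. lagrange_basis_at_0 Y y * y ^ card Y)"
    using stepanov_poly_coeff[of "Suc m" d Y] assms(3) lagrange_sum_power_Suc_card[OF assms(1,2)]
    by (simp add: m_def D_def)
  ultimately show ?thesis
    unfolding m_def[symmetric] by (metis (no_types, lifting) mult.assoc mult.left_commute)
qed

lemma stepanov_poly_factorization:
  fixes X Y :: "'a::field_gcd set"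
  assumes "finite X" and "finite Y" and "0 \<notin> X" and "0 \<notin> Y" and "Y \<noteq> {}" and "1 \<le> d"
    and "CHAR('a) = 0 \<or> d + card Y \<le> CHAR('a)"
    and "\<And>x y. x \<in> X \<Longrightarrow> y \<in> Y \<Longrightarrow> (x * y + 1) ^ d = 1"
  obtains h where "stepanov_poly Y d = (\<Prod>x\<in>insert 0 X. [:- x, 1:] ^ card Y) * h"
    and "h \<noteq> 0" and "(card X + 1) * card Y + degree h \<le> d + card Y - 1"
proof -
  have "(\<Prod>x\<in>insert 0 X. [:- x, 1:] ^ card Y) dvd stepanov_poly Y d"
    using assms by (intro prod_linear_power_dvd stepanov_poly_vanishing) auto
  then obtain h where F: "stepanov_poly Y d = (\<Prod>x\<in>insert 0 X. [:- x, 1:] ^ card Y) * h" ..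
  have "stepanov_poly Y d \<noteq> 0"
    using stepanov_poly_coeff_card_neq_0[OF assms(2,5,4,6,7)] by auto
  then have "h \<noteq> 0" using F by auto
  moreover have "degree (\<Prod>x\<in>insert 0 X. [:- x, 1::'a:] ^ card Y) =
      (\<Sum>x\<in>insert 0 X. degree ([:- x, 1::'a:] ^ card Y))"
    by (rule degree_prod_eq_sum_degree) simp
  moreover have "\<dots> = (card X + 1) * card Y"
    using assms(1,3) by (simp add: degree_linear_power)
  ultimately have "(card X + 1) * card Y + degree h = degree (stepanov_poly Y d)"
    unfolding F by (subst degree_mult_eq) (auto simp: prod_zero_iff)
  with stepanov_poly_degree[of Y d] have "(card X + 1) * card Y + degree h \<le> d + card Y - 1"
    by simp
  with F \<open>h \<noteq> 0\<close> show ?thesis by (rule that)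
qed

lemma card_mult_card_le_if_power_eq_1:
  fixes X Y :: "'a::field_gcd set"
  assumes "finite X" and "finite Y" and "0 \<notin> X" and "0 \<notin> Y" and "Y \<noteq> {}" and "1 \<le> d"
    and "CHAR('a) = 0 \<or> d + card Y \<le> CHAR('a)"
    and "\<And>x y. x \<in> X \<Longrightarrow> y \<in> Y \<Longrightarrow> (x * y + 1) ^ d = 1"
  shows "card X * card Y \<le> d - 1"
proof -
  obtain h where "stepanov_poly Y d = (\<Prod>x\<in>insert 0 X. [:- x, 1:] ^ card Y) * h" and "h \<noteq> 0"
    and "(card X + 1) * card Y + degree h \<le> d + card Y - 1"
    by (rule stepanov_poly_factorization[OF assms])
  then show ?thesis by (simp add: algebra_simps)
qed

lemma sum_relation_if_card_mult_card_eq: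
  fixes X Y :: "'a::field_gcd set"
  assumes "finite X" and "finite Y" and "0 \<notin> X" and "0 \<notin> Y" and "Y \<noteq> {}" and "2 \<le> d"
    and "CHAR('a) = 0 \<or> d + card Y \<le> CHAR('a)"
    and "\<And>x y. x \<in> X \<Longrightarrow> y \<in> Y \<Longrightarrow> (x * y + 1) ^ d = 1"
    and "card X * card Y = d - 1"
  shows "of_nat (d - 1) * (\<Sum>y\<in>Y. y) = - of_nat (card Y * (card Y + 1)) * (\<Sum>x\<in>X. inverse x)"
proof -
  let ?F = "stepanov_poly Y d" and ?R = "\<Prod>x\<in>X. [:- x, 1::'a:]" and ?m = "card Y"
  obtain h where F: "?F = (\<Prod>x\<in>insert 0 X. [:- x, 1:] ^ ?m) * h" and "h \<noteq> 0"
    and "(card X + 1) * ?m + degree h \<le> d + ?m - 1"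
    by (rule stepanov_poly_factorization[OF assms(1-5) _ assms(7,8)]) (use assms(6) in simp)
  then have "degree h = 0" using assms(9) by (simp add: algebra_simps)
  then obtain \<kappa> where "h = [:\<kappa>:]" by (rule degree_eq_zeroE)
  then have "?F = smult \<kappa> (monom 1 ?m * ?R ^ ?m)"
    using F assms(1,3) by (simp add: prod_power_distrib monom_altdef)
  then have "coeff ?F (Suc ?m) = - of_nat ?m * (\<Sum>x\<in>X. inverse x) * coeff ?F ?m"
    using coeff_1_power_prod_linear[OF assms(1,3), of ?m] by (simp add: coeff_monom_mult)
  then have "of_nat (d - 1) * (\<Sum>y\<in>Y. y) * coeff ?F ?m =
      - of_nat (?m * (?m + 1)) * (\<Sum>x\<in>X. inverse x) * coeff ?F ?m"
    using stepanov_poly_coeff_Suc_card[OF assms(2,5,6)] by (simp add: algebra_simps)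
  moreover have "coeff ?F ?m \<noteq> 0"
    using assms by (intro stepanov_poly_coeff_card_neq_0) auto
  ultimately show ?thesis by simp
qed

section \<open>Multiplicative subgroups\<close>

lemma mult_subgroupD:
  assumes "mult_subgroup G"
  shows "0 \<notin> G" and "1 \<in> G" and "\<And>x y. x \<in> G \<Longrightarrow> y \<in> G \<Longrightarrow> x * y \<in> G"
    and "\<And>x. x \<in> G \<Longrightarrow> inverse x \<in> G"
  using assms unfolding mult_subgroup_def by blast+

lemma mult_subgroup_image_mult:
  assumes "mult_subgroup G" and "g \<in> G"
  shows "(\<lambda>h. g * h) ` G = G"
proof
  show "(\<lambda>h. g * h) ` G \<subseteq> G" using mult_subgroupD(3)[OF assms(1)] assms(2) by auto
  show "G \<subseteq> (\<lambda>h. g * h) ` G"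
  proof
    fix x assume "x \<in> G"
    then have "inverse g * x \<in> G" using mult_subgroupD[OF assms(1)] assms(2) by blast
    moreover have "x = g * (inverse g * x)"
      using mult_subgroupD(1)[OF assms(1)] assms(2) by (auto simp: field_simps)
    ultimately show "x \<in> (\<lambda>h. g * h) ` G" by blast
  qed
qed

lemma mult_subgroup_power_card:
  assumes "mult_subgroup G" and "finite G" and "g \<in> G"
  shows "g ^ card G = 1"
proof -
  have "inj_on (\<lambda>h. g * h) G" using mult_subgroupD(1)[OF assms(1)] assms(3) by (auto intro: inj_onI)
  then have "(\<Prod>h\<in>G. h) = (\<Prod>h\<in>G. g * h)"
    using prod.reindex[of "\<lambda>h. g * h" G id] mult_subgroup_image_mult[OF assms(1,3)] by simp
  also have "\<dots> = g ^ card G * (\<Prod>h\<in>G. h)" by (simp add: prod.distrib)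
  finally show ?thesis
    using mult_subgroupD(1)[OF assms(1)] assms(2) by (auto simp: prod_zero_iff)
qed

lemma mult_subgroup_sum_eq_0:
  assumes "mult_subgroup G" and "h \<in> G" and "h \<noteq> 1"
  shows "(\<Sum>g\<in>G. g) = 0"
proof -
  have "inj_on (\<lambda>g. h * g) G" using mult_subgroupD(1)[OF assms(1)] assms(2) by (auto intro: inj_onI)
  then have "(\<Sum>g\<in>G. h * g) = (\<Sum>g\<in>G. g)"
    using sum.reindex[of "\<lambda>g. h * g" G id] mult_subgroup_image_mult[OF assms(1,2)] by simp
  then have "h * (\<Sum>g\<in>G. g) = 1 * (\<Sum>g\<in>G. g)" by (simp add: sum_distrib_left)
  then show ?thesis using assms(3) by (simp only: mult_cancel_right) simp
qed

lemma card_subgroup_minus_1: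
  assumes "mult_subgroup G" and "finite G"
  shows "card ((\<lambda>g. g - 1) ` (G - {1})) = card G - 1"
  using assms mult_subgroupD(2)[OF assms(1)] by (subst card_image) (auto intro: inj_onI)

lemma sum_subgroup_minus_1:
  assumes "mult_subgroup G" and "finite G" and "2 \<le> card G"
  shows "(\<Sum>s\<in>(\<lambda>g. g - 1) ` (G - {1}). s) = - of_nat (card G)"
proof -
  have "card (G - {1}) \<noteq> 0" using assms mult_subgroupD(2)[OF assms(1)] by simp
  then obtain h where "h \<in> G" "h \<noteq> 1" by (metis DiffE card.empty ex_in_conv singletonI)
  have "(\<Sum>s\<in>(\<lambda>g. g - 1) ` (G - {1}). s) = (\<Sum>g\<in>G - {1}. g - 1)"
    by (subst sum.reindex) (auto intro: inj_onI)
  also have "\<dots> = (\<Sum>g\<in>G. g) - 1 - of_nat (card G - 1)"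
    using assms(2) mult_subgroupD(2)[OF assms(1)] by (simp add: sum_subtractf sum_diff1)
  also have "\<dots> = - of_nat (card G)"
    using mult_subgroup_sum_eq_0[OF assms(1) \<open>h \<in> G\<close> \<open>h \<noteq> 1\<close>] assms(3) by (simp add: of_nat_diff)
  finally show ?thesis .
qed

lemma sum_inverse_subgroup_minus_1:
  assumes "mult_subgroup G" and "finite G"
  shows "2 * (\<Sum>s\<in>(\<lambda>g. g - 1) ` (G - {1}). inverse s) = - of_nat (card G - 1)"
proof -
  let ?f = "\<lambda>g. inverse (g - 1)"
  have "(\<Sum>s\<in>(\<lambda>g. g - 1) ` (G - {1}). inverse s) = (\<Sum>g\<in>G - {1}. ?f g)"
    by (subst sum.reindex) (auto intro: inj_onI)
  moreover have "(\<Sum>g\<in>G - {1}. ?f (inverse g)) = (\<Sum>g\<in>G - {1}. ?f g)"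
    using mult_subgroupD(4)[OF assms(1)] by (intro sum.reindex_bij_witness[of _ inverse inverse]) auto
  moreover have "?f g + ?f (inverse g) = -1" if "g \<in> G - {1}" for g
  proof -
    have "g \<noteq> 0" and "g - 1 \<noteq> 0" using that mult_subgroupD(1)[OF assms(1)] by auto
    then show ?thesis by (simp add: inverse_eq_divide divide_simps) (simp add: algebra_simps)
  qed
  then have "(\<Sum>g\<in>G - {1}. ?f g + ?f (inverse g)) = - of_nat (card G - 1)"
    using assms(2) mult_subgroupD(2)[OF assms(1)] by simp
  ultimately show ?thesis by (simp add: sum.distrib)
qed

lemma mult_subgroup_proper_card:
  fixes G :: "'a::{field, finite} set"
  assumes "mult_subgroup G" and "G \<noteq> UNIV - {0}"
  shows "2 * card G < CARD('a)"
proof -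
  obtain c where c: "c \<noteq> 0" "c \<notin> G"
    using assms mult_subgroupD(1)[OF assms(1)] by blast
  have "(\<lambda>g. c * g) ` G \<inter> G = {}"
  proof (rule ccontr)
    assume "(\<lambda>g. c * g) ` G \<inter> G \<noteq> {}"
    then obtain g where g: "g \<in> G" "c * g \<in> G" by auto
    then have "c * g * inverse g \<in> G" using mult_subgroupD(3,4)[OF assms(1)] by blast
    moreover have "g \<noteq> 0" using g(1) mult_subgroupD(1)[OF assms(1)] by auto
    ultimately show False using c(2) by (simp add: mult.assoc)
  qed
  moreover have "card ((\<lambda>g. c * g) ` G) = card G" using c(1) by (intro card_image inj_onI) auto
  ultimately have "card ((\<lambda>g. c * g) ` G \<union> G) = 2 * card G" by (simp add: card_Un_disjoint)
  moreover have "card ((\<lambda>g. c * g) ` G \<union> G) \<le> card (UNIV - {0 :: 'a})"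
    using c(1) mult_subgroupD(1)[OF assms(1)] by (intro card_mono) auto
  moreover have "card (UNIV - {0 :: 'a}) = CARD('a) - 1" by simp
  moreover have "0 < CARD('a)" by simp
  ultimately show ?thesis by linarith
qed

section \<open>Product sets equal to a shifted subgroup\<close>

lemma prodset_eq_image: "prodset A B = (\<lambda>(a, b). a * b) ` (A \<times> B)"
  by (auto simp: prodset_def)

lemma sum_prodset:
  assumes "inj_on (\<lambda>(x, y). x * y) (X \<times> Y)"
  shows "(\<Sum>s\<in>prodset X Y. f s) = (\<Sum>x\<in>X. \<Sum>y\<in>Y. f (x * y))"
  using assms by (simp add: prodset_eq_image sum.reindex sum.cartesian_product split_def)

lemma prodset_image_mult_right:
  "prodset ((\<lambda>a. a * c) ` A) B = (\<lambda>s. s * (c :: 'a::comm_semiring_1)) ` prodset A B"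
proof -
  have "(\<lambda>a. a * c) ` A \<times> B = (\<lambda>(a, b). (a * c, b)) ` (A \<times> B)" by force
  then show ?thesis by (simp add: prodset_eq_image image_image split_def mult_ac)
qed

lemma image_mult_shifted_subgroup:
  fixes G :: "'a::field set"
  assumes G: "mult_subgroup G" and "lam \<in> G"
  shows "(\<lambda>s. s * inverse lam) ` ((\<lambda>g. g - lam) ` G - {0}) = (\<lambda>g. g - 1) ` (G - {1})"
proof -
  have "lam \<noteq> 0" using assms mult_subgroupD(1)[OF G] by auto
  show ?thesis
  proof (intro equalityI subsetI)
    fix s
    assume "s \<in> (\<lambda>s. s * inverse lam) ` ((\<lambda>g. g - lam) ` G - {0})"
    then obtain g where "g \<in> G" "g - lam \<noteq> 0" and "s = (g - lam) * inverse lam" by blast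
    then have "s = g * inverse lam - 1" and "g * inverse lam \<noteq> 1"
      using \<open>lam \<noteq> 0\<close> by (simp_all add: algebra_simps field_simps)
    moreover have "g * inverse lam \<in> G" using \<open>g \<in> G\<close> assms mult_subgroupD[OF G] by blast
    ultimately show "s \<in> (\<lambda>g. g - 1) ` (G - {1})" by blast
  next
    fix s
    assume "s \<in> (\<lambda>g. g - 1) ` (G - {1})"
    then obtain h where "h \<in> G" "h \<noteq> 1" and "s = h - 1" by auto
    then have "s = (lam * h - lam) * inverse lam" and "lam * h - lam \<noteq> 0"
      using \<open>lam \<noteq> 0\<close> by (simp_all add: algebra_simps)
    moreover have "lam * h \<in> G" using \<open>h \<in> G\<close> assms mult_subgroupD(3)[OF G] by blast
    ultimately show "s \<in> (\<lambda>s. s * inverse lam) ` ((\<lambda>g. g - lam) ` G - {0})" by blast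
  qed
qed

lemma power_card_eq_1_if_prodset_eq:
  assumes "mult_subgroup G" and "finite G" and "prodset X Y = (\<lambda>g. g - 1) ` (G - {1})"
    and "x \<in> X" and "y \<in> Y"
  shows "(x * y + 1) ^ card G = 1"
proof -
  have "x * y \<in> (\<lambda>g. g - 1) ` (G - {1})"
    using assms(3-5) unfolding prodset_def by blast
  then have "x * y + 1 \<in> G" by auto
  then show ?thesis by (rule mult_subgroup_power_card[OF assms(1,2)])
qed

lemma card_mult_card_eq_if_prodset_eq:
  fixes G X Y :: "'a::field_gcd set"
  assumes G: "mult_subgroup G" "finite G" and char: "CHAR('a) = 0 \<or> 2 * card G < CHAR('a)"
    and X: "finite X" "X \<noteq> {}" "0 \<notin> X" and Y: "finite Y" "Y \<noteq> {}" "0 \<notin> Y"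
    and XY: "prodset X Y = (\<lambda>g. g - 1) ` (G - {1})"
  shows "card X * card Y = card G - 1"
proof -
  let ?S = "(\<lambda>g. g - 1) ` (G - {1})"
  note card_S = card_subgroup_minus_1[OF G]
  obtain x where "x \<in> X" using X(2) by blast
  then have "(\<lambda>y. x * y) ` Y \<subseteq> ?S" unfolding XY[symmetric] prodset_def by blast
  moreover have "inj_on (\<lambda>y. x * y) Y" using \<open>x \<in> X\<close> X(3) by (auto intro: inj_onI)
  ultimately have "card ((\<lambda>y. x * y) ` Y) \<le> card ?S" and "card ((\<lambda>y. x * y) ` Y) = card Y"
    using G(2) by (auto intro: card_mono card_image)
  then have "card Y \<le> card G - 1" using card_S by simp
  moreover have "card G - 1 \<le> card X * card Y"
    using card_S card_image_le[of "X \<times> Y" "\<lambda>(x, y). x * y"] X(1) Y(1)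
    by (simp add: XY[symmetric] prodset_eq_image card_cartesian_product)
  moreover have "card X * card Y \<le> card G - 1"
  proof (rule card_mult_card_le_if_power_eq_1[OF X(1) Y(1) X(3) Y(3) Y(2)])
    show "1 \<le> card G" using G mult_subgroupD(2)[OF G(1)] by (auto simp: Suc_le_eq card_gt_0_iff)
    show "CHAR('a) = 0 \<or> card G + card Y \<le> CHAR('a)" using char \<open>card Y \<le> card G - 1\<close> by auto
  qed (rule power_card_eq_1_if_prodset_eq[OF G XY])
  ultimately show ?thesis by simp
qed

lemma sums_if_prodset_eq:
  fixes G X Y :: "'a::field set"
  assumes G: "mult_subgroup G" "finite G" and "finite X" and "finite Y"
    and XY: "prodset X Y = (\<lambda>g. g - 1) ` (G - {1})"
    and card_XY: "card X * card Y = card G - 1" and "2 \<le> card G"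
  shows "(\<Sum>x\<in>X. x) * (\<Sum>y\<in>Y. y) = - of_nat (card G)"
    and "2 * ((\<Sum>x\<in>X. inverse x) * (\<Sum>y\<in>Y. inverse y)) = - of_nat (card G - 1)"
proof -
  let ?S = "(\<lambda>g. g - 1) ` (G - {1})"
  have "card ((\<lambda>(x, y). x * y) ` (X \<times> Y)) = card (X \<times> Y)"
    using XY card_XY card_subgroup_minus_1[OF G] by (simp add: prodset_eq_image card_cartesian_product)
  then have inj: "inj_on (\<lambda>(x, y). x * y) (X \<times> Y)"
    using assms(3,4) by (simp add: eq_card_imp_inj_on)
  have "(\<Sum>x\<in>X. x) * (\<Sum>y\<in>Y. y) = (\<Sum>s\<in>?S. s)"
    by (simp add: sum_product sum_prodset[OF inj] flip: XY)
  then show "(\<Sum>x\<in>X. x) * (\<Sum>y\<in>Y. y) = - of_nat (card G)"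
    using sum_subgroup_minus_1[OF G \<open>2 \<le> card G\<close>] by simp
  have "(\<Sum>x\<in>X. inverse x) * (\<Sum>y\<in>Y. inverse y) = (\<Sum>s\<in>?S. inverse s)"
    by (simp add: sum_product sum_prodset[OF inj] inverse_mult_distrib flip: XY)
  then show "2 * ((\<Sum>x\<in>X. inverse x) * (\<Sum>y\<in>Y. inverse y)) = - of_nat (card G - 1)"
    using sum_inverse_subgroup_minus_1[OF G] by simp
qed

lemma double_eq_of_sum_relations:
  fixes \<delta> N M sX sY iX iY :: "'a::field"
  assumes R1: "\<delta> * sY = - (M * (M + 1)) * iX" and R2: "\<delta> * sX = - (N * (N + 1)) * iY"
    and E1: "sX * sY = - (\<delta> + 1)" and E2: "2 * (iX * iY) = - \<delta>"
    and "\<delta> = N * M" and "\<delta> \<noteq> 0"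
  shows "2 * (\<delta> + 1) = (N + 1) * (M + 1)"
proof -
  have "\<delta> * \<delta> * (2 * (\<delta> + 1)) = - 2 * (\<delta> * \<delta> * (sX * sY))"
    unfolding E1 by (simp add: algebra_simps)
  also have "\<dots> = - 2 * ((\<delta> * sX) * (\<delta> * sY))" by (simp add: mult_ac)
  also have "\<dots> = N * (N + 1) * M * (M + 1) * - (2 * (iX * iY))"
    unfolding R1 R2 by (simp add: algebra_simps)
  also have "\<dots> = \<delta> * \<delta> * ((N + 1) * (M + 1))"
    unfolding E2 \<open>\<delta> = N * M\<close> by (simp add: algebra_simps)
  finally show ?thesis using \<open>\<delta> \<noteq> 0\<close> by simp
qed

lemma double_card_eq_if_prodset_eq:
  fixes G X Y :: "'a::field_gcd set"
  assumes G: "mult_subgroup G" "finite G" and char: "CHAR('a) = 0 \<or> 2 * card G < CHAR('a)"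
    and X: "finite X" "X \<noteq> {}" "0 \<notin> X" and Y: "finite Y" "Y \<noteq> {}" "0 \<notin> Y"
    and XY: "prodset X Y = (\<lambda>g. g - 1) ` (G - {1})"
    and card_XY: "card X * card Y = card G - 1" and "2 \<le> card G"
  shows "of_nat (2 * card G) = (of_nat ((card X + 1) * (card Y + 1)) :: 'a)"
proof -
  define d n m where "d = card G" and "n = card X" and "m = card Y"
  have "n \<noteq> 0" "m \<noteq> 0" using X(1,2) Y(1,2) by (simp_all add: n_def m_def)
  then have "n \<le> n * m" "m \<le> n * m" by simp_all
  then have "n \<le> d - 1" "m \<le> d - 1" using card_XY by (simp_all add: n_def m_def d_def)
  have power: "(x * y + 1) ^ d = 1" if "x \<in> X" "y \<in> Y" for x y
    using power_card_eq_1_if_prodset_eq[OF G XY that] by (simp add: d_def)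
  have power': "(y * x + 1) ^ d = 1" if "y \<in> Y" "x \<in> X" for x y
    using power[OF that(2,1)] by (simp add: mult.commute)
  define \<delta> N M where "\<delta> = (of_nat (d - 1) :: 'a)" and "N = (of_nat n :: 'a)" and "M = (of_nat m :: 'a)"
  define sX sY iX iY where "sX = (\<Sum>x\<in>X. x)" and "sY = (\<Sum>y\<in>Y. y)"
    and "iX = (\<Sum>x\<in>X. inverse x)" and "iY = (\<Sum>y\<in>Y. inverse y)"
  have "of_nat (d - 1) * sY = - of_nat (m * (m + 1)) * iX"
    unfolding sY_def iX_def m_def
    by (rule sum_relation_if_card_mult_card_eq[OF X(1) Y(1) X(3) Y(3) Y(2)])
      (use char \<open>m \<le> d - 1\<close> card_XY power \<open>2 \<le> card G\<close> in \<open>auto simp: d_def m_def\<close>)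
  then have R1: "\<delta> * sY = - (M * (M + 1)) * iX"
    by (simp only: \<delta>_def M_def of_nat_mult of_nat_add of_nat_1)
  have "of_nat (d - 1) * sX = - of_nat (n * (n + 1)) * iY"
    unfolding sX_def iY_def n_def
    by (rule sum_relation_if_card_mult_card_eq[OF Y(1) X(1) Y(3) X(3) X(2)])
      (use char \<open>n \<le> d - 1\<close> card_XY power' \<open>2 \<le> card G\<close> in \<open>auto simp: d_def n_def mult.commute\<close>)
  then have R2: "\<delta> * sX = - (N * (N + 1)) * iY"
    by (simp only: \<delta>_def N_def of_nat_mult of_nat_add of_nat_1)
  have E1: "sX * sY = - (\<delta> + 1)" and E2: "2 * (iX * iY) = - \<delta>"
    using sums_if_prodset_eq[OF G X(1) Y(1) XY card_XY \<open>2 \<le> card G\<close>] \<open>2 \<le> card G\<close>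
    by (simp_all add: sX_def sY_def iX_def iY_def \<delta>_def d_def of_nat_diff)
  have "\<delta> = N * M" using card_XY by (simp add: \<delta>_def N_def M_def n_def m_def d_def flip: of_nat_mult)
  moreover have "\<delta> \<noteq> 0"
    using char \<open>2 \<le> card G\<close> unfolding \<delta>_def by (intro of_nat_neq_0_below_CHAR) (auto simp: d_def)
  ultimately have "2 * (\<delta> + 1) = (N + 1) * (M + 1)"
    by (rule double_eq_of_sum_relations[OF R1 R2 E1 E2])
  then show ?thesis
    using \<open>2 \<le> card G\<close> by (simp add: \<delta>_def N_def M_def d_def n_def m_def of_nat_diff)
      (simp add: algebra_simps)
qed

lemma prodset_neq_subgroup_minus_1:
  fixes G X Y :: "'a::field_gcd set"
  assumes G: "mult_subgroup G" "finite G" and char: "CHAR('a) = 0 \<or> 2 * card G < CHAR('a)"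
    and X: "0 \<notin> X" "2 \<le> card X" and Y: "0 \<notin> Y" "2 \<le> card Y"
  shows "prodset X Y \<noteq> (\<lambda>g. g - 1) ` (G - {1})"
proof
  assume XY: "prodset X Y = (\<lambda>g. g - 1) ` (G - {1})"
  have fin: "finite X" "X \<noteq> {}" "finite Y" "Y \<noteq> {}"
    using X(2) Y(2) by (auto intro: card_ge_0_finite)
  define d n m where "d = card G" and "n = card X" and "m = card Y"
  have card_XY: "n * m = d - 1"
    unfolding n_def m_def d_def
    by (rule card_mult_card_eq_if_prodset_eq[OF G char fin(1,2) X(1) fin(3,4) Y(1) XY])
  have "n * 2 \<le> n * m" "2 * m \<le> n * m" using X(2) Y(2) by (simp_all add: n_def m_def)
  then have "n + m \<le> n * m" by linarith
  then have "2 \<le> d" using card_XY X(2) by (simp add: n_def)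
  then have "of_nat (2 * d) = (of_nat ((n + 1) * (m + 1)) :: 'a)"
    unfolding d_def n_def m_def
    using card_XY by (intro double_card_eq_if_prodset_eq[OF G char fin(1,2) X(1) fin(3,4) Y(1) XY])
      (simp_all add: d_def n_def m_def)
  then have "2 * d = (n + 1) * (m + 1)"
    using char \<open>n + m \<le> n * m\<close> card_XY \<open>2 \<le> d\<close> by (intro of_nat_inj_below_CHAR) (auto simp: d_def)
  then show False
    using card_XY \<open>n + m \<le> n * m\<close> \<open>2 \<le> d\<close> by (simp add: algebra_simps)
qed

theorem theorem1p10:
  fixes G :: "'p::prime_card mod_ring set" and lam :: "'p mod_ring"
  assumes "odd CARD('p)"
    and "mult_subgroup G" and "G \<noteq> UNIV - {0}"
    and "lam \<in> G"
  shows "\<not> (\<exists>A B. A \<subseteq> UNIV - {0} \<and> B \<subseteq> UNIV - {0} \<and> card A \<ge> 2 \<and> card B \<ge> 2 \<and>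
            prodset A B = (\<lambda>g. g - lam) ` G - {0})"
proof
  assume "\<exists>A B. A \<subseteq> UNIV - {0} \<and> B \<subseteq> UNIV - {0} \<and> card A \<ge> 2 \<and> card B \<ge> 2 \<and>
            prodset A B = (\<lambda>g. g - lam) ` G - {0}"
  then obtain A B where A: "A \<subseteq> UNIV - {0}" "2 \<le> card A" and B: "B \<subseteq> UNIV - {0}" "2 \<le> card B"
    and AB: "prodset A B = (\<lambda>g. g - lam) ` G - {0}"
    by blast
  let ?A = "(\<lambda>a. a * inverse lam) ` A"
  have "lam \<noteq> 0" using mult_subgroupD(1)[OF assms(2)] assms(4) by blast
  have "prodset ?A B = (\<lambda>g. g - 1) ` (G - {1})"
    unfolding prodset_image_mult_right AB by (rule image_mult_shifted_subgroup[OF assms(2,4)])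
  moreover have "card ?A = card A" using \<open>lam \<noteq> 0\<close> by (intro card_image inj_onI) auto
  moreover have "0 \<notin> ?A" using A(1) \<open>lam \<noteq> 0\<close> by auto
  moreover have "2 * card G < CHAR('p mod_ring)"
    using mult_subgroup_proper_card[OF assms(2,3)] by simp
  ultimately show False
    using prodset_neq_subgroup_minus_1[of G ?A B] assms(2) A(2) B by auto
qed

end
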